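(* Let $\ell\in\{1,\dots,L\}$, assume the channel growth condition and the asymptotic quadratic-Lipschitz condition on $\mathcal G^{(\ell)}$, let $Z_k$ be i.i.d. $\mathcal N(\mathbf 0,\mathbf I_{D_\ell})$ and let $S\subset\mathcal S^+_{D_\ell}$ be compact. Then for every $\epsilon>0$ there is $R<\infty$ such that, for all sufficiently large $n$, $$\sup_{Q\in S}\mathbb P\Big(\Big\|\frac1{C_\ell(n)}\sum_{k=1}^{C_\ell(n)}\mathcal G^{(\ell)}(\sqrt QZ_k)\Big\|_F>R\Big)\le e^{-n\epsilon}.$$
   Context: $\mathcal S^+_D$ denotes the symmetric positive semidefinite $D\times D$ real matrices, $\sqrt Q$ the positive semidefinite square root, $\|\cdot\|_2$ the Euclidean norm and $\|\cdot\|_F$ the Frobenius norm. $\mathcal G^{(\ell)}:\mathbb R^{D_\ell}\to\mathcal S^+_{D_{\ell+1}}$ is a map and $C_\ell(n)$ are positive integers. Channel growth condition: $C_\ell(n)/n\to\alpha_\ell\in(0,\infty)$. Asymptotic quadratic-Lipschitz condition: $\mathcal G^{(\ell)}$ is continuous and for every $\varepsilon>0$ there is $C_\varepsilon>0$ such that for all $z,z'\in\mathbb R^{D_\ell}$, $\|\mathcal G^{(\ell)}(z)-\mathcal G^{(\ell)}(z')\|_F\le C_\varepsilon[1+\|z-z'\|_2(\|z\|_2+\|z'\|_2)]+\varepsilon(\|z\|_2^2+\|z'\|_2^2)$. *)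

theory Defs
  imports "HOL-Probability.Probability"
begin

definition psd :: "real^'n^'n \<Rightarrow> bool" where
  "psd Q \<longleftrightarrow> transpose Q = Q \<and> (\<forall>x. 0 \<le> x \<bullet> (Q *v x))"

definition psd_sqrt :: "real^'n^'n \<Rightarrow> real^'n^'n" where
  "psd_sqrt Q = (THE B. psd B \<and> B ** B = Q)"

definition std_gauss :: "(real^'n) measure" where
  "std_gauss = density lborel (\<lambda>z. ennreal (\<Prod>i\<in>UNIV. std_normal_density (z $ i)))"

definition iid_gauss :: "nat \<Rightarrow> (nat \<Rightarrow> real^'n) measure" where
  "iid_gauss c = PiM {..<c} (\<lambda>_. std_gauss)"

end

theory Submission
  imports Defs
begin

text \<open>
  Since \<open>|\<surd>Q z|\<^sup>2 = z \<bullet> Q z\<close> and \<open>S\<close> is bounded, this growth bound holds uniformly for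
  \<open>Q \<in> S\<close>, so the empirical mean can only exceed \<open>R = a + b T\<close> if
  \<open>\<Sum>\<^sub>k |Z\<^sub>k|\<^sup>2 \<ge> C(n) T\<close>. By Chernoff's bound with \<open>E exp(|Z|\<^sup>2/4) = 2\<^bsup>D/2\<^esup>\<close> this has probability
  at most \<open>exp(-C(n) t)\<close> for \<open>T = 4 t + 2 D ln 2\<close>, and \<open>C(n) \<ge> \<alpha> n / 2\<close> eventually, so
  \<open>t = 2 \<epsilon> / \<alpha>\<close> gives the rate \<open>exp(-n \<epsilon>)\<close>.
  The identity for \<open>|\<surd>Q z|\<^sup>2\<close> requires that \<open>psd_sqrt Q\<close> really is a square root, i.e.
  existence and uniqueness of positive semidefinite square roots, which we derive from the
  spectral theorem for symmetric matrices.
\<close>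

section \<open>Spectral theorem for symmetric matrices\<close>

lemma nonneg_quadratic_linear_coeff_zero:
  fixes a b :: real
  assumes "0 \<le> b" and nonneg: "\<And>t. 0 \<le> t * a + t\<^sup>2 * b"
  shows "a = 0"
proof (rule ccontr)
  assume "a \<noteq> 0"
  define t where "t = - a / (b + 1)"
  have "t * (b + 1) = - a" using \<open>0 \<le> b\<close> by (simp add: t_def)
  have "(b + 1)\<^sup>2 * (t * a + t\<^sup>2 * b) = (t * (b + 1)) * (a * (b + 1)) + (t * (b + 1))\<^sup>2 * b"
    by (simp add: power2_eq_square algebra_simps)
  also have "\<dots> = - a\<^sup>2 * (b + 1) + a\<^sup>2 * b"
    unfolding \<open>t * (b + 1) = - a\<close> by (simp add: power2_eq_square)
  also have "\<dots> < 0" using \<open>a \<noteq> 0\<close> by (simp add: algebra_simps)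
  finally show False using nonneg[of t] by (metis mult_nonneg_nonneg not_le zero_le_power2)
qed

lemma mat_mult_vec: "mat c *v x = c *\<^sub>R (x::real^'n)"
  by (simp add: vec_eq_iff matrix_vector_mult_def mat_def if_distrib[of "\<lambda>y. y * _"] cong: if_cong)

lemma symmetric_matrix_inner:
  fixes A :: "real^'n^'n"
  assumes "transpose A = A"
  shows "x \<bullet> (A *v y) = (A *v x) \<bullet> y"
  by (metis assms dot_lmul_matrix vector_transpose_matrix)

lemma symmetric_nonneg_on_subspace_inner_zero:
  fixes B :: "real^'n^'n"
  assumes sym: "transpose B = B" and V: "subspace V"
    and nonneg: "\<forall>x\<in>V. 0 \<le> x \<bullet> (B *v x)"
    and u: "u \<in> V" "u \<bullet> (B *v u) = 0" and w: "w \<in> V"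
  shows "w \<bullet> (B *v u) = 0"
proof -
  have "0 \<le> t * (2 * (w \<bullet> (B *v u))) + t\<^sup>2 * (w \<bullet> (B *v w))" for t
  proof -
    have "u + t *\<^sub>R w \<in> V" using V u w by (simp add: subspace_add subspace_mul)
    then have "0 \<le> (u + t *\<^sub>R w) \<bullet> (B *v (u + t *\<^sub>R w))" using nonneg by blast
    also have "\<dots> = t * (2 * (w \<bullet> (B *v u))) + t\<^sup>2 * (w \<bullet> (B *v w))"
      using u symmetric_matrix_inner[OF sym, of u w]
      by (simp add: matrix_vector_right_distrib matrix_vector_mult_scaleR inner_add_left
          inner_add_right inner_commute power2_eq_square algebra_simps)
    finally show ?thesis .
  qed
  moreover have "0 \<le> w \<bullet> (B *v w)" using nonneg w by blast
  ultimately have "2 * (w \<bullet> (B *v u)) = 0" by (rule nonneg_quadratic_linear_coeff_zero[rotated])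
  then show ?thesis by simp
qed

lemma psd_mult_vec_eq_0_if_quadratic_form_eq_0:
  assumes "psd B" and "v \<bullet> (B *v v) = 0"
  shows "B *v v = 0"
  using symmetric_nonneg_on_subspace_inner_zero[of B UNIV v "B *v v"] assms
  by (simp add: psd_def)

lemma symmetric_invariant_subspace_unit_eigenvector:
  fixes A :: "real^'n^'n"
  assumes sym: "transpose A = A" and V: "subspace V" and inv: "\<forall>x\<in>V. A *v x \<in> V"
    and "V \<noteq> {0}"
  obtains u where "u \<in> V" "norm u = 1" "A *v u = (u \<bullet> (A *v u)) *\<^sub>R u"
proof -
  define K where "K = V \<inter> sphere 0 1"
  obtain v where v: "v \<in> V" "v \<noteq> 0" using \<open>V \<noteq> {0}\<close> V subspace_0 by blast
  have "(1 / norm v) *\<^sub>R v \<in> K" using v V by (simp add: K_def subspace_mul norm_divide)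
  moreover have "compact K"
    unfolding K_def by (intro closed_Int_compact closed_subspace V compact_sphere)
  moreover have "continuous_on K (\<lambda>x. x \<bullet> (A *v x))"
    by (intro continuous_intros linear_continuous_on matrix_vector_mul_bounded_linear)
  ultimately obtain u where u: "u \<in> K" and umax: "\<And>y. y \<in> K \<Longrightarrow> y \<bullet> (A *v y) \<le> u \<bullet> (A *v u)"
    using continuous_attains_sup[of K "\<lambda>x. x \<bullet> (A *v x)"] by blast
  define \<mu> where "\<mu> = u \<bullet> (A *v u)"
  define B where "B = mat \<mu> - A"
  have Bx: "B *v x = \<mu> *\<^sub>R x - A *v x" for x
    by (simp add: B_def matrix_vector_mult_diff_rdistrib mat_mult_vec)
  have uV: "u \<in> V" and un: "norm u = 1" using u by (auto simp: K_def)
  \<comment> \<open>\<open>\<mu>\<close> is the maximum of the Rayleigh quotient on \<open>V\<close>, so \<open>B\<close> is nonnegative on \<open>V\<close>\<close>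
  have "0 \<le> x \<bullet> (B *v x)" if x: "x \<in> V" for x
  proof (cases "x = 0")
    case False
    have "(1 / norm x) *\<^sub>R x \<in> K" using x False V by (simp add: K_def subspace_mul norm_divide)
    then have "(1 / norm x)\<^sup>2 * (x \<bullet> (A *v x)) \<le> \<mu>"
      using umax by (fastforce simp: \<mu>_def matrix_vector_mult_scaleR power2_eq_square)
    then have "x \<bullet> (A *v x) \<le> \<mu> * (x \<bullet> x)"
      using False by (simp add: field_simps power2_norm_eq_inner)
    then show ?thesis by (simp add: Bx inner_diff_right)
  qed simp
  moreover have "u \<bullet> (B *v u) = 0"
    using un by (simp add: Bx inner_diff_right \<mu>_def flip: power2_norm_eq_inner)
  moreover have "B *v u \<in> V" using uV inv V by (simp add: Bx subspace_diff subspace_mul)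
  moreover have "transpose B = B" using sym by (simp add: B_def vec_eq_iff transpose_def mat_def)
  ultimately have "(B *v u) \<bullet> (B *v u) = 0"
    using symmetric_nonneg_on_subspace_inner_zero[OF _ V _ uV] by blast
  then have "A *v u = \<mu> *\<^sub>R u" by (simp add: Bx)
  then show thesis using that uV un \<mu>_def by blast
qed

definition orthonormal_eigenvectors :: "real^'n^'n \<Rightarrow> (real^'n) set \<Rightarrow> bool" where
  "orthonormal_eigenvectors A E \<longleftrightarrow> finite E \<and> pairwise orthogonal E \<and>
     (\<forall>u\<in>E. norm u = 1 \<and> A *v u = (u \<bullet> (A *v u)) *\<^sub>R u)"

lemma symmetric_invariant_subspace_eigenbasis:
  fixes A :: "real^'n^'n"
  assumes sym: "transpose A = A"
  shows "subspace V \<Longrightarrow> \<forall>x\<in>V. A *v x \<in> V \<Longrightarrow> \<exists>E. orthonormal_eigenvectors A E \<and> span E = V"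
proof (induction "dim V" arbitrary: V rule: less_induct)
  case less
  note V = less.prems(1) and inv = less.prems(2)
  show ?case
  proof (cases "V = {0}")
    case True
    then show ?thesis by (intro exI[of _ "{}"]) (auto simp: orthonormal_eigenvectors_def)
  next
    case False
    then obtain u where uV: "u \<in> V" and un: "norm u = 1" and Au: "A *v u = (u \<bullet> (A *v u)) *\<^sub>R u"
      using symmetric_invariant_subspace_unit_eigenvector[OF sym V inv] by blast
    define W where "W = {x \<in> V. u \<bullet> x = 0}"
    have W: "subspace W" using V unfolding W_def subspace_def by (auto simp: inner_add_right)
    have "A *v x \<in> W" if "x \<in> W" for x
      using that inv symmetric_matrix_inner[OF sym, of u x] by (subst (asm) Au) (auto simp: W_def)
    moreover have "dim W < dim V"
    proof (rule dim_psubset)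
      have "u \<notin> W" using un by (simp add: W_def flip: power2_norm_eq_inner)
      then have "W \<subset> V" using uV unfolding W_def by blast
      then show "span W \<subset> span V" using W V by (metis span_eq_iff)
    qed
    ultimately obtain E where E: "orthonormal_eigenvectors A E" "span E = W"
      using less.hyps[OF _ W] by blast
    have "span (insert u E) = V"
    proof
      show "span (insert u E) \<subseteq> V"
        using E(2) V uV span_superset[of E] unfolding W_def by (intro span_minimal) auto
      show "V \<subseteq> span (insert u E)"
      proof
        fix x assume "x \<in> V"
        then have "x - (u \<bullet> x) *\<^sub>R u \<in> span E"
          using E(2) uV V un by (simp add: W_def subspace_diff subspace_mul inner_diff_right
              flip: power2_norm_eq_inner)
        then show "x \<in> span (insert u E)" by (auto simp: span_insert)
      qed
    qed
    moreover have "orthonormal_eigenvectors A (insert u E)"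
      using E un Au span_superset[of E]
      by (auto simp: orthonormal_eigenvectors_def pairwise_insert W_def orthogonal_def inner_commute)
    ultimately show ?thesis by blast
  qed
qed

lemma symmetric_eigenbasis:
  fixes A :: "real^'n^'n"
  assumes "transpose A = A"
  obtains E where "orthonormal_eigenvectors A E" "span E = UNIV"
  using symmetric_invariant_subspace_eigenbasis[OF assms, of UNIV] by auto

lemma orthonormal_eigenvectors_inner:
  assumes "orthonormal_eigenvectors A E" "u \<in> E" "w \<in> E"
  shows "u \<bullet> w = (if u = w then 1 else 0)"
  using assms
  by (auto simp: orthonormal_eigenvectors_def pairwise_def orthogonal_def simp flip: power2_norm_eq_inner)

lemma matrix_eq_on_spanning_set:
  fixes M N :: "real^'n^'m"
  assumes "span E = UNIV" and "\<And>w. w \<in> E \<Longrightarrow> M *v w = N *v w"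
  shows "M = N"
  unfolding matrix_eq
  using real_vector.linear_eq_on[OF matrix_vector_mul_linear matrix_vector_mul_linear] assms
  by blast

section \<open>Positive semidefinite square roots\<close>

definition outer_product :: "real^'n \<Rightarrow> real^'n^'n" where
  "outer_product u = (\<chi> i j. u $ i * u $ j)"

lemma outer_product_mult_vec: "outer_product u *v x = (u \<bullet> x) *\<^sub>R u"
  by (simp add: outer_product_def vec_eq_iff matrix_vector_mult_def inner_vec_def sum_distrib_left
      algebra_simps)

lemma sum_matrix_mult_vec: "(\<Sum>u\<in>E. f u) *v x = (\<Sum>u\<in>E. f u *v x)"
  by (induction E rule: infinite_finite_induct) (auto simp: matrix_vector_mult_add_rdistrib)

lemma psd_square_root_exists:
  fixes Q :: "real^'n^'n"
  assumes "psd Q"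
  obtains B where "psd B" "B ** B = Q"
proof -
  have nonneg: "\<And>x. 0 \<le> x \<bullet> (Q *v x)" using assms by (auto simp: psd_def)
  obtain E where E: "orthonormal_eigenvectors Q E" "span E = UNIV"
    using assms symmetric_eigenbasis unfolding psd_def by blast
  define ev where "ev u = u \<bullet> (Q *v u)" for u
  define B where "B = (\<Sum>u\<in>E. sqrt (ev u) *\<^sub>R outer_product u)"
  have Bx: "B *v x = (\<Sum>u\<in>E. (sqrt (ev u) * (u \<bullet> x)) *\<^sub>R u)" for x
    by (simp add: B_def sum_matrix_mult_vec outer_product_mult_vec flip: scaleR_matrix_vector_assoc)
  have Bw: "B *v w = sqrt (ev w) *\<^sub>R w" if "w \<in> E" for w
  proof -
    have "B *v w = (\<Sum>u\<in>E. if u = w then sqrt (ev u) *\<^sub>R u else 0)"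
      unfolding Bx by (rule sum.cong) (use orthonormal_eigenvectors_inner[OF E(1) _ that] in auto)
    then show ?thesis using that E(1) by (simp add: orthonormal_eigenvectors_def)
  qed
  have "psd B"
    unfolding psd_def
  proof (intro conjI allI)
    show "transpose B = B"
      by (simp add: B_def vec_eq_iff transpose_def outer_product_def mult.commute)
    fix x
    have "x \<bullet> (B *v x) = (\<Sum>u\<in>E. sqrt (ev u) * (u \<bullet> x)\<^sup>2)"
      by (simp add: Bx inner_sum_right power2_eq_square inner_commute mult.assoc)
    also have "\<dots> \<ge> 0" using nonneg by (intro sum_nonneg) (simp add: ev_def)
    finally show "0 \<le> x \<bullet> (B *v x)" .
  qed
  moreover have "B ** B = Q"
  proof (rule matrix_eq_on_spanning_set[OF E(2)])
    fix w assume w: "w \<in> E"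
    have "(B ** B) *v w = (sqrt (ev w) * sqrt (ev w)) *\<^sub>R w"
      using w by (simp add: Bw matrix_vector_mult_scaleR flip: matrix_vector_mul_assoc)
    also have "\<dots> = Q *v w"
      using nonneg E(1) w by (simp add: ev_def orthonormal_eigenvectors_def)
    finally show "(B ** B) *v w = Q *v w" .
  qed
  ultimately show thesis using that by blast
qed

lemma psd_square_root_unique:
  fixes B C :: "real^'n^'n"
  assumes B: "psd B" and C: "psd C" and eq: "B ** B = C ** C"
  shows "B = C"
proof -
  define D where "D = B - C"
  have Dx: "D *v x = B *v x - C *v x" for x by (simp add: D_def matrix_vector_mult_diff_rdistrib)
  have sD: "transpose D = D" using B C by (simp add: psd_def D_def vec_eq_iff transpose_def)
  obtain E where E: "orthonormal_eigenvectors D E" "span E = UNIV"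
    using symmetric_eigenbasis[OF sD] by blast
  have "D = 0"
  proof (rule matrix_eq_on_spanning_set[OF E(2)])
    fix v assume v: "v \<in> E"
    define \<mu> where "\<mu> = v \<bullet> (D *v v)"
    have Dv: "D *v v = \<mu> *\<^sub>R v" and "v \<noteq> 0"
      using E(1) v by (auto simp: \<mu>_def orthonormal_eigenvectors_def)
    \<comment> \<open>\<open>B D + D C = B B - C C = 0\<close>; take the quadratic form at the eigenvector \<open>v\<close>\<close>
    have "B *v (D *v v) + D *v (C *v v) = 0"
      unfolding Dx by (simp add: matrix_vector_mult_diff_distrib matrix_vector_mul_assoc eq)
    then have "v \<bullet> (B *v (D *v v)) + v \<bullet> (D *v (C *v v)) = 0"
      by (metis inner_add_right inner_zero_right)
    then have "\<mu> * (v \<bullet> (B *v v) + v \<bullet> (C *v v)) = 0"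
      using symmetric_matrix_inner[OF sD, of v "C *v v"]
      by (simp add: Dv matrix_vector_mult_scaleR inner_commute algebra_simps)
    moreover have "0 \<le> v \<bullet> (B *v v)" "0 \<le> v \<bullet> (C *v v)" using B C by (auto simp: psd_def)
    ultimately have "\<mu> = 0 \<or> (v \<bullet> (B *v v) = 0 \<and> v \<bullet> (C *v v) = 0)" by auto
    then have "\<mu> = 0"
      using psd_mult_vec_eq_0_if_quadratic_form_eq_0[OF B] psd_mult_vec_eq_0_if_quadratic_form_eq_0[OF C] Dx Dv \<open>v \<noteq> 0\<close> by force
    then show "D *v v = 0 *v v" using Dv by simp
  qed
  then show ?thesis by (simp add: D_def)
qed

lemma psd_sqrt_psd_and_square:
  fixes Q :: "real^'n^'n"
  assumes "psd Q"
  shows "psd (psd_sqrt Q) \<and> psd_sqrt Q ** psd_sqrt Q = Q"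
proof -
  have "\<exists>!B. psd B \<and> B ** B = Q"
    using psd_square_root_exists[OF assms] psd_square_root_unique by metis
  then show ?thesis unfolding psd_sqrt_def by (rule theI')
qed

lemma norm_psd_sqrt_mult_vec_sq:
  fixes Q :: "real^'n^'n"
  assumes "psd Q"
  shows "(norm (psd_sqrt Q *v z))\<^sup>2 = z \<bullet> (Q *v z)"
proof -
  have "transpose (psd_sqrt Q) = psd_sqrt Q" and sq: "psd_sqrt Q ** psd_sqrt Q = Q"
    using psd_sqrt_psd_and_square[OF assms] by (auto simp: psd_def)
  then show ?thesis
    by (metis matrix_vector_mul_assoc power2_norm_eq_inner symmetric_matrix_inner)
qed

lemma quadratic_form_le_norm:
  fixes Q :: "real^'n^'n"
  shows "z \<bullet> (Q *v z) \<le> real CARD('n) * real CARD('n) * norm Q * (norm z)\<^sup>2"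
proof -
  have "\<bar>Q $ i $ j\<bar> \<le> norm Q" for i j
    using component_le_norm_cart[of "Q $ i" j] Finite_Cartesian_Product.norm_nth_le[of Q i] by linarith
  then have onorm_le: "onorm ((*v) Q) \<le> real CARD('n) * real CARD('n) * norm Q"
    by (rule onorm_le_matrix_component)
  have "z \<bullet> (Q *v z) \<le> norm z * norm (Q *v z)" by (rule norm_cauchy_schwarz)
  also have "\<dots> \<le> norm z * (onorm ((*v) Q) * norm z)"
    by (intro mult_left_mono onorm[OF matrix_vector_mul_bounded_linear]) simp
  also have "\<dots> \<le> norm z * (real CARD('n) * real CARD('n) * norm Q * norm z)"
    by (intro mult_left_mono mult_right_mono onorm_le) auto
  finally show ?thesis by (simp add: power2_eq_square mult_ac)
qed

lemma compact_psd_sqrt_bounded: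
  fixes S :: "(real^'n^'n) set"
  assumes "compact S" and "S \<subseteq> {Q. psd Q}"
  obtains M where "0 \<le> M" "\<And>Q z. Q \<in> S \<Longrightarrow> (norm (psd_sqrt Q *v z))\<^sup>2 \<le> M * (norm z)\<^sup>2"
proof -
  obtain N where N: "\<And>Q. Q \<in> S \<Longrightarrow> norm Q \<le> N"
    using compact_imp_bounded[OF assms(1)] unfolding bounded_iff by blast
  define M where "M = real CARD('n) * real CARD('n) * max N 0"
  have "(norm (psd_sqrt Q *v z))\<^sup>2 \<le> M * (norm z)\<^sup>2" if "Q \<in> S" for Q z
  proof -
    have "(norm (psd_sqrt Q *v z))\<^sup>2 \<le> real CARD('n) * real CARD('n) * norm Q * (norm z)\<^sup>2"
      using that assms(2) norm_psd_sqrt_mult_vec_sq quadratic_form_le_norm by fastforce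
    also have "\<dots> \<le> M * (norm z)\<^sup>2"
      using N[OF that] by (auto simp: M_def intro!: mult_right_mono)
    finally show ?thesis .
  qed
  moreover have "0 \<le> M" by (simp add: M_def)
  ultimately show thesis using that by blast
qed

section \<open>Gaussian tail of the sum of squared norms\<close>

lemma sets_std_gauss [measurable_cong]: "sets (std_gauss :: (real^'n) measure) = sets borel"
  by (simp add: std_gauss_def)

lemma nn_integral_lborel_prod_components:
  fixes g :: "real \<Rightarrow> real"
  assumes [measurable]: "g \<in> borel_measurable borel" and nonneg: "\<And>x. 0 \<le> g x"
  shows "(\<integral>\<^sup>+ z. ennreal (\<Prod>i\<in>UNIV. g (z $ i)) \<partial>(lborel :: (real^'n) measure))
         = (\<integral>\<^sup>+ x. ennreal (g x) \<partial>lborel) ^ CARD('n)"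
proof -
  have inj: "inj (\<lambda>i::'n. axis i (1::real))" by (auto simp: inj_def axis_eq_axis)
  have Basis: "(Basis :: (real^'n) set) = range (\<lambda>i. axis i 1)" by (auto simp: Basis_vec_def)
  have "ennreal (\<Prod>i\<in>UNIV. g (z $ i)) = (\<Prod>b\<in>Basis. ennreal (g (z \<bullet> b)))" for z :: "real^'n"
    unfolding Basis prod.reindex[OF inj] by (simp add: inner_axis prod_ennreal nonneg)
  then have "(\<integral>\<^sup>+ z. ennreal (\<Prod>i\<in>UNIV. g (z $ i)) \<partial>(lborel :: (real^'n) measure))
      = (\<integral>\<^sup>+ z. (\<Prod>b\<in>Basis. ennreal (g (z \<bullet> b))) \<partial>(lborel :: (real^'n) measure))"
    by simp
  also have "\<dots> = (\<Prod>b\<in>(Basis :: (real^'n) set). \<integral>\<^sup>+ x. ennreal (g x) \<partial>lborel)"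
    by (rule nn_integral_lborel_prod) auto
  finally show ?thesis by simp
qed

lemma nn_integral_std_normal_density: "(\<integral>\<^sup>+ x. ennreal (std_normal_density x) \<partial>lborel) = 1"
  by (simp add: nn_integral_eq_integral)

lemma prob_space_std_gauss: "prob_space (std_gauss :: (real^'n) measure)"
proof
  have "emeasure std_gauss (space std_gauss :: (real^'n) set)
      = (\<integral>\<^sup>+ z. ennreal (\<Prod>i\<in>UNIV. std_normal_density (z $ i)) \<partial>(lborel :: (real^'n) measure))"
    by (simp add: std_gauss_def emeasure_density)
  also have "\<dots> = 1"
    by (simp add: nn_integral_lborel_prod_components nn_integral_std_normal_density)
  finally show "emeasure (std_gauss :: (real^'n) measure) (space std_gauss) = 1" .
qed

lemma exp_quarter_sq_times_std_normal_density:
  "exp (x\<^sup>2 / 4) * std_normal_density x = sqrt 2 * normal_density 0 (sqrt 2) x"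
proof -
  have "exp (x\<^sup>2 / 4) * exp (- x\<^sup>2 / 2) = exp (- x\<^sup>2 / 4)" by (simp flip: exp_add)
  then show ?thesis by (simp add: normal_density_def real_sqrt_mult field_simps)
qed

lemma norm_vec_sq: "(norm z)\<^sup>2 = (\<Sum>i\<in>UNIV. (z $ i)\<^sup>2)" for z :: "real^'n"
  by (simp add: norm_vec_def L2_set_def sum_nonneg)

lemma nn_integral_std_gauss_exp_norm_sq:
  "(\<integral>\<^sup>+ z. ennreal (exp ((norm z)\<^sup>2 / 4)) \<partial>(std_gauss :: (real^'n) measure))
   = ennreal (sqrt 2 ^ CARD('n))"
proof -
  let ?g = "\<lambda>x. exp (x\<^sup>2 / 4) * std_normal_density x"
  have "ennreal (\<Prod>i\<in>UNIV. std_normal_density (z $ i)) * ennreal (exp ((norm z)\<^sup>2 / 4))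
      = ennreal (\<Prod>i\<in>UNIV. ?g (z $ i))" for z :: "real^'n"
    using norm_vec_sq[of z]
    by (simp add: prod.distrib exp_sum sum_divide_distrib prod_nonneg flip: ennreal_mult)
  then have "(\<integral>\<^sup>+ z. ennreal (exp ((norm z)\<^sup>2 / 4)) \<partial>(std_gauss :: (real^'n) measure))
      = (\<integral>\<^sup>+ z. ennreal (\<Prod>i\<in>UNIV. ?g (z $ i)) \<partial>(lborel :: (real^'n) measure))"
    by (simp add: std_gauss_def nn_integral_density)
  also have "\<dots> = (\<integral>\<^sup>+ x. ennreal (?g x) \<partial>lborel) ^ CARD('n)"
    by (rule nn_integral_lborel_prod_components) auto
  also have "(\<integral>\<^sup>+ x. ennreal (?g x) \<partial>lborel) = sqrt 2"
    by (simp add: exp_quarter_sq_times_std_normal_density nn_integral_eq_integral)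
  finally show ?thesis by (simp add: ennreal_power)
qed

lemma prob_space_iid_gauss: "prob_space (iid_gauss c :: (nat \<Rightarrow> real^'n) measure)"
  unfolding iid_gauss_def by (rule prob_space_PiM) (rule prob_space_std_gauss)

lemma borel_measurable_iid_gauss_sum_norm_sq [measurable]:
  "(\<lambda>Zs. \<Sum>k<c. (norm (Zs k))\<^sup>2) \<in> borel_measurable (iid_gauss c :: (nat \<Rightarrow> real^'n) measure)"
  unfolding iid_gauss_def by measurable

lemma iid_gauss_sum_norm_sq_tail:
  "measure (iid_gauss c :: (nat \<Rightarrow> real^'n) measure)
     {Zs \<in> space (iid_gauss c). real c * (4 * t + 2 * ln 2 * CARD('n)) \<le> (\<Sum>k<c. (norm (Zs k))\<^sup>2)}
   \<le> exp (- real c * t)"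
proof -
  let ?M = "iid_gauss c :: (nat \<Rightarrow> real^'n) measure"
  let ?a = "real c * (4 * t + 2 * ln 2 * CARD('n))"
  define sq where "sq Zs = (\<Sum>k<c. (norm (Zs k :: real^'n))\<^sup>2)" for Zs
  interpret product_sigma_finite "\<lambda>_. std_gauss :: (real^'n) measure"
    by (simp add: product_sigma_finite_def prob_space_imp_sigma_finite prob_space_std_gauss)
  have [measurable]: "sq \<in> borel_measurable ?M"
    unfolding sq_def by measurable
  have "emeasure ?M {Zs \<in> space ?M. ?a \<le> sq Zs}
      \<le> ennreal (exp (- (1/4) * ?a)) * (\<integral>\<^sup>+ Zs. ennreal (exp (1/4 * sq Zs)) * indicator (space ?M) Zs \<partial>?M)"
    by (rule Chernoff_ineq_nn_integral_ge) auto
  also have "(\<integral>\<^sup>+ Zs. ennreal (exp (1/4 * sq Zs)) * indicator (space ?M) Zs \<partial>?M)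
      = (\<integral>\<^sup>+ Zs. (\<Prod>k<c. ennreal (exp ((norm (Zs k))\<^sup>2 / 4))) \<partial>?M)"
    by (intro nn_integral_cong)
      (simp add: sq_def exp_sum sum_divide_distrib prod_ennreal flip: sum_distrib_left)
  also have "\<dots> = (\<Prod>k<c. \<integral>\<^sup>+ z. ennreal (exp ((norm z)\<^sup>2 / 4)) \<partial>(std_gauss :: (real^'n) measure))"
    unfolding iid_gauss_def by (rule product_nn_integral_prod) auto
  also have "\<dots> = ennreal (sqrt 2 ^ (CARD('n) * c))"
    by (simp add: nn_integral_std_gauss_exp_norm_sq ennreal_power power_mult)
  also have "ennreal (exp (- (1/4) * ?a)) * \<dots> = ennreal (exp (- real c * t))"
  proof -
    have "sqrt 2 ^ (CARD('n) * c) = exp (real (CARD('n) * c) * ln (sqrt 2))"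
      unfolding exp_of_nat_mult by simp
    also have "ln (sqrt 2) = ln 2 / 2" by (simp add: ln_sqrt)
    finally have "sqrt 2 ^ (CARD('n) * c) = exp (real (CARD('n) * c) * (ln 2 / 2))" .
    then show ?thesis by (simp add: field_simps flip: ennreal_mult exp_add)
  qed
  finally show ?thesis
    unfolding measure_def sq_def by (intro enn2real_leI) auto
qed

section \<open>Empirical means of quadratically growing functions\<close>

lemma quadratic_growth_of_quadratic_lipschitz:
  fixes G :: "'a::real_normed_vector \<Rightarrow> 'b::real_normed_vector"
  assumes "\<And>z z'. norm (G z - G z')
             \<le> K * (1 + norm (z - z') * (norm z + norm z')) + e * ((norm z)\<^sup>2 + (norm z')\<^sup>2)"
  shows "norm (G z) \<le> norm (G 0) + K + (K + e) * (norm z)\<^sup>2"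
proof -
  have "norm (G z) \<le> norm (G 0) + norm (G z - G 0)" by (rule norm_triangle_sub)
  also have "norm (G z - G 0) \<le> K + (K + e) * (norm z)\<^sup>2"
    using assms[of z 0] by (simp add: power2_eq_square algebra_simps)
  finally show ?thesis by simp
qed

lemma compact_psd_sqrt_quadratic_growth:
  fixes G :: "real^'n \<Rightarrow> 'b::real_normed_vector" and S :: "(real^'n^'n) set"
  assumes "compact S" and "S \<subseteq> {Q. psd Q}"
    and growth: "\<And>z. norm (G z) \<le> a + b * (norm z)\<^sup>2" and "0 \<le> b"
  obtains B where "0 \<le> B" "\<And>Q z. Q \<in> S \<Longrightarrow> norm (G (psd_sqrt Q *v z)) \<le> a + B * (norm z)\<^sup>2"
proof -
  obtain M where "0 \<le> M" and M: "\<And>Q z. Q \<in> S \<Longrightarrow> (norm (psd_sqrt Q *v z))\<^sup>2 \<le> M * (norm z)\<^sup>2"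
    using compact_psd_sqrt_bounded[OF assms(1,2)] by blast
  have "norm (G (psd_sqrt Q *v z)) \<le> a + (b * M) * (norm z)\<^sup>2" if "Q \<in> S" for Q z
    using growth[of "psd_sqrt Q *v z"] mult_left_mono[OF M[OF that, of z] \<open>0 \<le> b\<close>]
    by (simp add: mult.assoc)
  moreover have "0 \<le> b * M" using \<open>0 \<le> b\<close> \<open>0 \<le> M\<close> by simp
  ultimately show thesis using that by blast
qed

lemma norm_mean_le_quadratic:
  fixes f :: "'a::real_normed_vector \<Rightarrow> 'b::real_normed_vector"
  assumes f: "\<And>z. norm (f z) \<le> a + b * (norm z)\<^sup>2" and "0 < c"
  shows "norm ((1 / real c) *\<^sub>R (\<Sum>k<c. f (Zs k))) \<le> a + b * ((\<Sum>k<c. (norm (Zs k))\<^sup>2) / real c)"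
proof -
  have "norm ((1 / real c) *\<^sub>R (\<Sum>k<c. f (Zs k))) \<le> (1 / real c) * (\<Sum>k<c. norm (f (Zs k)))"
    by (simp add: norm_sum divide_right_mono)
  also have "\<dots> \<le> (1 / real c) * (\<Sum>k<c. a + b * (norm (Zs k))\<^sup>2)"
    by (intro mult_left_mono sum_mono f) simp
  also have "\<dots> = a + b * ((\<Sum>k<c. (norm (Zs k))\<^sup>2) / real c)"
    using \<open>0 < c\<close> by (simp add: sum.distrib field_simps flip: sum_distrib_left)
  finally show ?thesis .
qed

lemma iid_gauss_mean_tail:
  fixes f :: "real^'n \<Rightarrow> 'b::real_normed_vector"
  assumes f: "\<And>z. norm (f z) \<le> a + b * (norm z)\<^sup>2" and "0 \<le> b" and "0 < c"
  shows "measure (iid_gauss c :: (nat \<Rightarrow> real^'n) measure)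
           {Zs \<in> space (iid_gauss c).
              norm ((1 / real c) *\<^sub>R (\<Sum>k<c. f (Zs k))) > a + b * (4 * t + 2 * ln 2 * CARD('n))}
         \<le> exp (- real c * t)"
proof -
  let ?M = "iid_gauss c :: (nat \<Rightarrow> real^'n) measure"
  let ?T = "4 * t + 2 * ln 2 * CARD('n)"
  interpret prob_space ?M by (rule prob_space_iid_gauss)
  have "{Zs \<in> space ?M. norm ((1 / real c) *\<^sub>R (\<Sum>k<c. f (Zs k))) > a + b * ?T}
      \<subseteq> {Zs \<in> space ?M. real c * ?T \<le> (\<Sum>k<c. (norm (Zs k))\<^sup>2)}"
  proof safe
    fix Zs assume "a + b * ?T < norm ((1 / real c) *\<^sub>R (\<Sum>k<c. f (Zs k)))"
    then have "b * ?T < b * ((\<Sum>k<c. (norm (Zs k))\<^sup>2) / real c)"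
      using norm_mean_le_quadratic[OF f \<open>0 < c\<close>, of Zs] by linarith
    then have "?T < (\<Sum>k<c. (norm (Zs k))\<^sup>2) / real c"
      using \<open>0 \<le> b\<close> by (rule mult_left_less_imp_less)
    then show "real c * ?T \<le> (\<Sum>k<c. (norm (Zs k))\<^sup>2)"
      using \<open>0 < c\<close> by (simp add: field_simps)
  qed
  then have "measure ?M {Zs \<in> space ?M. norm ((1 / real c) *\<^sub>R (\<Sum>k<c. f (Zs k))) > a + b * ?T}
      \<le> measure ?M {Zs \<in> space ?M. real c * ?T \<le> (\<Sum>k<c. (norm (Zs k))\<^sup>2)}"
    by (rule finite_measure_mono) measurable
  also have "\<dots> \<le> exp (- real c * t)" by (rule iid_gauss_sum_norm_sq_tail)
  finally show ?thesis .
qed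

theorem mainTheorem18:
  fixes G :: "real^'d \<Rightarrow> real^'e^'e"
    and C :: "nat \<Rightarrow> nat"
    and \<alpha> :: real
    and S :: "(real^'d^'d) set"
  assumes G_psd: "\<forall>z. psd (G z)"
    and C_pos: "\<forall>n. 0 < C n"
    and alpha_pos: "0 < \<alpha>"
    and growth: "(\<lambda>n. real (C n) / real n) \<longlonglongrightarrow> \<alpha>"
    and G_cont: "continuous_on UNIV G"
    and G_qlip: "\<forall>\<epsilon>>0. \<exists>C\<epsilon>>0. \<forall>z z'. norm (G z - G z')
                   \<le> C\<epsilon> * (1 + norm (z - z') * (norm z + norm z')) + \<epsilon> * (norm z ^ 2 + norm z' ^ 2)"
    and S_compact: "compact S"
    and S_psd: "S \<subseteq> {Q. psd Q}"
  shows "\<forall>\<epsilon>>0. \<exists>R::real. \<forall>\<^sub>F n in sequentially. \<forall>Q\<in>S.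
           measure (iid_gauss (C n))
             {Zs \<in> space (iid_gauss (C n)).
                norm ((1 / real (C n)) *\<^sub>R (\<Sum>k<C n. G (psd_sqrt Q *v Zs k))) > R}
           \<le> exp (- real n * \<epsilon>)"
proof (intro allI impI)
  fix \<epsilon> :: real assume "\<epsilon> > 0"
  obtain K where qlip: "\<And>z z'. norm (G z - G z')
      \<le> K * (1 + norm (z - z') * (norm z + norm z')) + 1 * ((norm z)\<^sup>2 + (norm z')\<^sup>2)"
      and "K > 0"
    using G_qlip zero_less_one by blast
  have "0 \<le> K + 1" using \<open>K > 0\<close> by simp
  obtain B where "0 \<le> B"
    and growth_bound: "\<And>Q z. Q \<in> S \<Longrightarrow> norm (G (psd_sqrt Q *v z)) \<le> norm (G 0) + K + B * (norm z)\<^sup>2"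
    using compact_psd_sqrt_quadratic_growth[OF S_compact S_psd
        quadratic_growth_of_quadratic_lipschitz[OF qlip] \<open>0 \<le> K + 1\<close>] by blast
  define t where "t = 2 * \<epsilon> / \<alpha>"
  have "\<forall>\<^sub>F n in sequentially. \<alpha> / 2 < real (C n) / real n"
    using order_tendstoD(1)[OF growth, of "\<alpha> / 2"] alpha_pos by linarith
  then show "\<exists>R::real. \<forall>\<^sub>F n in sequentially. \<forall>Q\<in>S.
           measure (iid_gauss (C n))
             {Zs \<in> space (iid_gauss (C n)).
                norm ((1 / real (C n)) *\<^sub>R (\<Sum>k<C n. G (psd_sqrt Q *v Zs k))) > R}
           \<le> exp (- real n * \<epsilon>)"
  proof (intro exI[of _ "norm (G 0) + K + B * (4 * t + 2 * ln 2 * CARD('d))"],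
      elim eventually_mono, intro ballI order_trans[OF iid_gauss_mean_tail])
    fix n Q assume n: "\<alpha> / 2 < real (C n) / real n" and "Q \<in> S"
    show "norm (G (psd_sqrt Q *v z)) \<le> norm (G 0) + K + B * (norm z)\<^sup>2" for z
      using growth_bound[OF \<open>Q \<in> S\<close>] .
    have "0 < real n" using n alpha_pos by (cases "n = 0") auto
    then have "real n * \<epsilon> \<le> real (C n) * t"
      using n \<open>\<epsilon> > 0\<close> alpha_pos by (simp add: t_def field_simps)
    then show "exp (- real (C n) * t) \<le> exp (- real n * \<epsilon>)" by simp
  qed (use \<open>0 \<le> B\<close> C_pos in auto)
qed

end
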